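(* Let $\beta\in(0,\pi/2)$ and put $\delta=\cot\beta>0$. Let $s,r\in\mathbb{R}$ with $D:=\sqrt{s^2+(\delta s-r)^2}>0$, and put $\gamma_1(s)=(2s\delta,2s,0)$, $\gamma_2(r)=(2r,0,0)\in\mathbb{R}^3$. Let $x=(x_1,x_2,x_3)$ and $y=(y_1,y_2,y_3)$ be points of $\mathbb{R}^3$ satisfying \[ \sqrt{(x_1-2s\delta)^2+(x_2-2s)^2+x_3^2}+\sqrt{(x_1-2r)^2+x_2^2+x_3^2}=\sqrt{(y_1-2s\delta)^2+(y_2-2s)^2+y_3^2}+\sqrt{(y_1-2r)^2+y_2^2+y_3^2}, \] \[ \frac{\delta(x_1-2s\delta)+(x_2-2s)}{\sqrt{(x_1-2s\delta)^2+(x_2-2s)^2+x_3^2}}=\frac{\delta(y_1-2s\delta)+(y_2-2s)}{\sqrt{(y_1-2s\delta)^2+(y_2-2s)^2+y_3^2}}, \] \[ \frac{x_1-2r}{\sqrt{(x_1-2r)^2+x_2^2+x_3^2}}=\frac{y_1-2r}{\sqrt{(y_1-2r)^2+y_2^2+y_3^2}}. \] Define $\rho\ge0$ by $\cosh\rho=\dfrac{|x-\gamma_1(s)|+|x-\gamma_2(r)|}{2D}$ (the prolate spheroidal "radial" coordinate of $x$ with respect to the foci $\gamma_1(s),\gamma_2(r)$, which are at distance $2D$ apart; by the first equation it is the same for $y$). If $\rho>\ln(5+8\delta)$, then either $x=y$ or $x=(y_1,y_2,-y_3)$.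
   Context: This is the setting of multistatic SAR with transmitters on the line $\gamma_1$ and receivers on the line $\gamma_2$, the two lines lying in the plane $x_3=0$ and meeting at angle $\beta$. The three equations express that the scene points $x$ and $y$ give the same bistatic travel distance $|\gamma_1(s)-\cdot|+|\cdot-\gamma_2(r)|$ and the same derivatives of it with respect to $s$ and $r$, i.e. they are the conditions for two points of the canonical relation of the forward scattering operator (phase $\omega(t-(|\gamma_1(s)-x|+|x-\gamma_2(r)|)/c_0)$) to project to the same point of the data cotangent space. The conclusion says the only possible artefact is the mirror image across the plane $x_3=0$. *)

theory Defs
  imports Complex_Main
begin

end

theory Submission
  imports Defs "HOL-Analysis.Euclidean_Space"
begin

text \<open>Put \<open>A = |x - \<gamma>\<^sub>1(s)|\<close>, \<open>B = |x - \<gamma>\<^sub>2(r)|\<close> and \<open>S = A + B\<close>. As \<open>A\<^sup>2 - B\<^sup>2 = S (S - 2B)\<close> is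
  affine in \<open>x\<close>, moving from \<open>x\<close> to \<open>y\<close> on the spheroid \<open>A + B = S\<close> shifts \<open>y - x\<close> along the
  focal axis by \<open>-S \<Delta>\<close>, where \<open>\<Delta>\<close> is the change of \<open>B\<close>. The other two equations say that the
  unit vectors towards the foci have equal projections onto \<open>\<gamma>\<^sub>1'\<close> and \<open>\<gamma>\<^sub>2'\<close>, so the components
  of \<open>y - x\<close> along these directions are \<open>\<Delta>\<close> times bounded factors. The focal axis lies in their
  span, hence \<open>\<Delta> = 0\<close> once \<open>S\<close> is large against the focal distance, which is what
  \<open>\<rho> > ln (5 + 8 \<delta>)\<close> guarantees. Then \<open>y - x\<close> is orthogonal to the plane \<open>x\<^sub>3 = 0\<close> while
  \<open>|y - \<gamma>\<^sub>2(r)| = |x - \<gamma>\<^sub>2(r)|\<close>, so \<open>y\<close> is \<open>x\<close> or its mirror image.\<close>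

lemma power2_norm_diff_difference:
  fixes z F1 F2 :: "'a::real_inner"
  shows "(norm (z - F1))\<^sup>2 - (norm (z - F2))\<^sup>2 = 2 * inner z (F2 - F1) + (norm F1)\<^sup>2 - (norm F2)\<^sup>2"
  by (simp add: power2_norm_eq_inner inner_diff inner_commute algebra_simps)

lemma confocal_shift_mult_eq_0:
  fixes x y F1 F2 u v :: "'a::real_inner"
  assumes sum_x: "norm (x - F1) + norm (x - F2) = S"
    and sum_y: "norm (y - F1) + norm (y - F2) = S"
    and u_x: "inner u (x - F1) = c1 * norm (x - F1)"
    and u_y: "inner u (y - F1) = c1 * norm (y - F1)"
    and v_x: "inner v (x - F2) = c2 * norm (x - F2)"
    and v_y: "inner v (y - F2) = c2 * norm (y - F2)"
    and foci: "F2 - F1 = a *\<^sub>R u + b *\<^sub>R v"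
  shows "(norm (y - F2) - norm (x - F2)) * (S - a * c1 + b * c2) = 0"
proof -
  have difference_of_squares:
    "2 * inner z (F2 - F1) + (norm F1)\<^sup>2 - (norm F2)\<^sup>2 = S * (S - 2 * norm (z - F2))"
    if "norm (z - F1) + norm (z - F2) = S" for z
  proof -
    have "2 * inner z (F2 - F1) + (norm F1)\<^sup>2 - (norm F2)\<^sup>2 = (norm (z - F1))\<^sup>2 - (norm (z - F2))\<^sup>2"
      by (rule power2_norm_diff_difference [symmetric])
    also have "\<dots> = (S - norm (z - F2))\<^sup>2 - (norm (z - F2))\<^sup>2"
      by (simp flip: that)
    also have "\<dots> = S * (S - 2 * norm (z - F2))"
      by (simp add: power2_eq_square algebra_simps)
    finally show ?thesis .
  qed
  have axis_shift: "inner (y - x) (F2 - F1) = - S * (norm (y - F2) - norm (x - F2))"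
    using difference_of_squares [OF sum_x] difference_of_squares [OF sum_y]
    by (simp add: inner_diff_left algebra_simps)
  have axis_decomposed: "inner (y - x) (F2 - F1) = a * inner u (y - x) + b * inner v (y - x)"
    by (simp add: foci inner_add_right inner_commute)
  have u_shift: "inner u (y - x) = - c1 * (norm (y - F2) - norm (x - F2))"
  proof -
    have "inner u (y - x) = inner u (y - F1) - inner u (x - F1)"
      by (simp add: inner_diff_right)
    also have "\<dots> = c1 * (norm (y - F1) - norm (x - F1))"
      using u_x u_y by (simp add: algebra_simps)
    also have "norm (y - F1) - norm (x - F1) = - (norm (y - F2) - norm (x - F2))"
      using sum_x sum_y by linarith
    finally show ?thesis by (simp add: algebra_simps)
  qed
  have v_shift: "inner v (y - x) = c2 * (norm (y - F2) - norm (x - F2))"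
  proof -
    have "inner v (y - x) = inner v (y - F2) - inner v (x - F2)"
      by (simp add: inner_diff_right)
    then show ?thesis using v_x v_y by (simp add: algebra_simps)
  qed
  have "- S * (norm (y - F2) - norm (x - F2)) = a * inner u (y - x) + b * inner v (y - x)"
    using axis_shift axis_decomposed by linarith
  also have "\<dots> = (b * c2 - a * c1) * (norm (y - F2) - norm (x - F2))"
    unfolding u_shift v_shift by (simp add: algebra_simps)
  finally show ?thesis by algebra
qed

lemma inner_divide_norm_mult_norm: "inner u z / norm z * norm z = inner u z"
  by (cases "z = 0") simp_all

lemma abs_inner_divide_norm_le: "\<bar>inner u z / norm z\<bar> \<le> norm u"
  by (cases "z = 0") (simp_all add: Cauchy_Schwarz_ineq2 divide_le_eq)

text \<open>The hypotheses on \<open>u\<close> and \<open>v\<close> are stated with quotients; at a focus they read \<open>0 = 0\<close>,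
  since the inner product vanishes there and \<open>t / 0 = 0\<close>.\<close>

lemma confocal_ambiguity_orthogonal:
  fixes x y F1 F2 u v :: "'a::real_inner"
  assumes sum_eq: "norm (x - F1) + norm (x - F2) = norm (y - F1) + norm (y - F2)"
    and u_eq: "inner u (x - F1) / norm (x - F1) = inner u (y - F1) / norm (y - F1)"
    and v_eq: "inner v (x - F2) / norm (x - F2) = inner v (y - F2) / norm (y - F2)"
    and foci: "F2 - F1 = a *\<^sub>R u + b *\<^sub>R v"
    and far: "\<bar>a\<bar> * norm u + \<bar>b\<bar> * norm v < norm (x - F1) + norm (x - F2)"
  shows "norm (y - F2) = norm (x - F2) \<and> inner u (y - x) = 0 \<and> inner v (y - x) = 0"
proof -
  define S where "S = norm (x - F1) + norm (x - F2)"
  define c1 where "c1 = inner u (x - F1) / norm (x - F1)"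
  define c2 where "c2 = inner v (x - F2) / norm (x - F2)"
  have "\<bar>a * c1\<bar> + \<bar>b * c2\<bar> \<le> \<bar>a\<bar> * norm u + \<bar>b\<bar> * norm v"
    unfolding c1_def c2_def abs_mult
    by (intro add_mono mult_left_mono abs_inner_divide_norm_le abs_ge_zero)
  then have "S - a * c1 + b * c2 \<noteq> 0"
    using far abs_ge_self [of "a * c1"] abs_ge_minus_self [of "b * c2"] unfolding S_def by linarith
  moreover have "(norm (y - F2) - norm (x - F2)) * (S - a * c1 + b * c2) = 0"
  proof (rule confocal_shift_mult_eq_0 [OF _ _ _ _ _ _ foci])
    show "norm (x - F1) + norm (x - F2) = S" "norm (y - F1) + norm (y - F2) = S"
      by (simp_all add: S_def sum_eq)
    show "inner u (x - F1) = c1 * norm (x - F1)" "inner v (x - F2) = c2 * norm (x - F2)"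
      unfolding c1_def c2_def by (rule inner_divide_norm_mult_norm [symmetric])+
    show "inner u (y - F1) = c1 * norm (y - F1)" "inner v (y - F2) = c2 * norm (y - F2)"
      unfolding c1_def c2_def u_eq v_eq by (rule inner_divide_norm_mult_norm [symmetric])+
  qed
  ultimately have F2_eq: "norm (y - F2) = norm (x - F2)"
    by simp
  then have "norm (y - F1) = norm (x - F1)"
    using sum_eq by simp
  then have "inner u (y - F1) = inner u (x - F1)" and "inner v (y - F2) = inner v (x - F2)"
    using u_eq v_eq F2_eq inner_divide_norm_mult_norm by metis+
  then show ?thesis
    using F2_eq by (simp add: inner_diff_right)
qed

lemma norm_triple: "norm ((a, b, c) :: real \<times> real \<times> real) = sqrt (a\<^sup>2 + b\<^sup>2 + c\<^sup>2)"
  by (simp add: norm_Pair)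

lemma half_lt_cosh_of_ln_lt:
  fixes a x :: real
  assumes "0 < a" and "ln a < x"
  shows "a / 2 < cosh x"
proof -
  have "a < exp x"
    using assms by (metis exp_less_cancel_iff exp_ln)
  then have "a < exp x + exp (- x)"
    using exp_gt_zero [of "- x"] by linarith
  then show ?thesis
    by (simp add: cosh_field_def)
qed

lemma bistatic_focal_bound:
  fixes \<delta> s r :: real
  assumes "0 \<le> \<delta>"
  shows "2 * \<bar>s\<bar> * sqrt (\<delta>\<^sup>2 + 1) + 2 * \<bar>r\<bar> \<le> 4 * (1 + \<delta>) * sqrt (s\<^sup>2 + (\<delta> * s - r)\<^sup>2)"
proof -
  define D where "D = sqrt (s\<^sup>2 + (\<delta> * s - r)\<^sup>2)"
  have s_le: "\<bar>s\<bar> \<le> D" and sr_le: "\<bar>\<delta> * s - r\<bar> \<le> D"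
    unfolding D_def by (simp_all add: real_le_rsqrt)
  have "sqrt (\<delta>\<^sup>2 + 1) \<le> 1 + \<delta>"
    using assms by (intro real_le_lsqrt) (simp_all add: power2_eq_square algebra_simps)
  then have "\<bar>s\<bar> * sqrt (\<delta>\<^sup>2 + 1) \<le> D * (1 + \<delta>)"
    using s_le assms by (intro mult_mono) simp_all
  moreover have "\<bar>r\<bar> \<le> D * (1 + \<delta>)"
  proof -
    have "\<bar>\<delta> * s\<bar> \<le> \<delta> * D"
      using s_le assms by (simp add: abs_mult mult_left_mono)
    then show ?thesis
      using sr_le by (simp add: algebra_simps)
  qed
  ultimately show ?thesis
    unfolding D_def by (simp add: algebra_simps)
qed

theorem mainTheorem2:
  fixes \<beta> \<delta> s r D \<rho> x1 x2 x3 y1 y2 y3 :: real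
  assumes beta: "0 < \<beta>" "\<beta> < pi / 2"
    and delta: "\<delta> = cot \<beta>"
    and Ddef: "D = sqrt (s^2 + (\<delta> * s - r)^2)"
    and Dpos: "D > 0"
    and e1: "sqrt ((x1 - 2*s*\<delta>)^2 + (x2 - 2*s)^2 + x3^2) + sqrt ((x1 - 2*r)^2 + x2^2 + x3^2)
           = sqrt ((y1 - 2*s*\<delta>)^2 + (y2 - 2*s)^2 + y3^2) + sqrt ((y1 - 2*r)^2 + y2^2 + y3^2)"
    and e2: "(\<delta> * (x1 - 2*s*\<delta>) + (x2 - 2*s)) / sqrt ((x1 - 2*s*\<delta>)^2 + (x2 - 2*s)^2 + x3^2)
           = (\<delta> * (y1 - 2*s*\<delta>) + (y2 - 2*s)) / sqrt ((y1 - 2*s*\<delta>)^2 + (y2 - 2*s)^2 + y3^2)"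
    and e3: "(x1 - 2*r) / sqrt ((x1 - 2*r)^2 + x2^2 + x3^2)
           = (y1 - 2*r) / sqrt ((y1 - 2*r)^2 + y2^2 + y3^2)"
    and rho_nonneg: "\<rho> \<ge> 0"
    and rho_def: "cosh \<rho> = (sqrt ((x1 - 2*s*\<delta>)^2 + (x2 - 2*s)^2 + x3^2)
                              + sqrt ((x1 - 2*r)^2 + x2^2 + x3^2)) / (2 * D)"
    and rho_big: "\<rho> > ln (5 + 8 * \<delta>)"
  shows "(x1, x2, x3) = (y1, y2, y3) \<or> (x1, x2, x3) = (y1, y2, - y3)"
proof -
  define X Y F1 F2 u v :: "real \<times> real \<times> real"
    where "X = (x1, x2, x3)" and "Y = (y1, y2, y3)"
      and "F1 = (2*s*\<delta>, 2*s, 0)" and "F2 = (2*r, 0, 0)"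
      and "u = (\<delta>, 1, 0)" and "v = (1, 0, 0)"
  note coordinates = X_def Y_def F1_def F2_def u_def v_def norm_triple
  have "0 < \<delta>"
    using beta delta cot_gt_zero by simp
  have sum_eq: "norm (X - F1) + norm (X - F2) = norm (Y - F1) + norm (Y - F2)"
    using e1 by (simp add: coordinates)
  have u_eq: "inner u (X - F1) / norm (X - F1) = inner u (Y - F1) / norm (Y - F1)"
    using e2 by (simp add: coordinates algebra_simps)
  have v_eq: "inner v (X - F2) / norm (X - F2) = inner v (Y - F2) / norm (Y - F2)"
    using e3 by (simp add: coordinates)
  have foci: "F2 - F1 = (- 2 * s) *\<^sub>R u + (2 * r) *\<^sub>R v"
    by (simp add: coordinates algebra_simps)
  have "(5 + 8 * \<delta>) / 2 < cosh \<rho>"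
    using \<open>0 < \<delta>\<close> rho_big by (intro half_lt_cosh_of_ln_lt) simp_all
  then have "(5 + 8 * \<delta>) * D < norm (X - F1) + norm (X - F2)"
    using rho_def Dpos by (simp add: coordinates field_simps)
  moreover have "4 * (1 + \<delta>) * D \<le> (5 + 8 * \<delta>) * D"
    using Dpos \<open>0 < \<delta>\<close> by (intro mult_right_mono) simp_all
  moreover have "\<bar>- 2 * s\<bar> * norm u + \<bar>2 * r\<bar> * norm v \<le> 4 * (1 + \<delta>) * D"
    using bistatic_focal_bound [of \<delta> s r] \<open>0 < \<delta>\<close> by (simp add: Ddef coordinates abs_mult)
  ultimately have far: "\<bar>- 2 * s\<bar> * norm u + \<bar>2 * r\<bar> * norm v < norm (X - F1) + norm (X - F2)"
    by linarith
  have "norm (Y - F2) = norm (X - F2) \<and> inner u (Y - X) = 0 \<and> inner v (Y - X) = 0"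
    by (rule confocal_ambiguity_orthogonal [OF sum_eq u_eq v_eq foci far])
  then have "y1 = x1" "y2 = x2" "y3\<^sup>2 = x3\<^sup>2"
    by (auto simp: coordinates algebra_simps)
  then show ?thesis
    by (auto simp: power2_eq_iff)
qed

end
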